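(* Let $A,B$ be finite-range interactions on $\Lambda$, $\kappa\ge0$, and assume $2s(A)\|A\|_\kappa\le\rho<1$. Then there is a constant $C_{\rm BCH}=C_{\rm BCH}(s(A),s(B),\rho)$ such that \[ \sum_{n\ge1}\frac1{n!}\|\mathrm{ad}_A^{\,n}(B)\|_\kappa\le C_{\rm BCH}\|A\|_\kappa\|B\|_\kappa . \] Consequently, with $e^ABe^{-A}-B$ denoting the interaction $\sum_{n\ge1}\frac1{n!}\mathrm{ad}_A^{\,n}(B)$ (convergent in $\|\cdot\|_\kappa$), $\|e^ABe^{-A}-B\|_\kappa\le C_{\rm BCH}\|A\|_\kappa\|B\|_\kappa$.
   Context: $\Lambda=(\mathbb Z/L\mathbb Z)^d$, $L\in2\mathbb N$, fermionic Fock space over $\ell^2(\Lambda)\otimes\mathbb C^2$ with CAR operators $c_{x\sigma}$. $\mathfrak A_X^{\rm even}$: parity-even elements of the algebra generated by $c_{x\sigma},c^*_{x\sigma}$, $x\in X$. An interaction is $\Phi=\{\Phi_X\}_{X\subset\Lambda}$ with $\Phi_X\in\mathfrak A_X^{\rm even}$; finite-range means $\Phi_X=0$ for $\operatorname{diam}X>R$. $\|\Phi\|_\kappa=\sup_x\sum_{X\ni x}e^{\kappa|X|}\|\Phi_X\|$, $s(\Phi)=\sup\{|X|:\Phi_X\neq0\}$, $(\mathrm{ad}_A(B))_Z=\sum_{X\cup Y=Z}[A_X,B_Y]$, $\mathrm{ad}_A^{\,0}(B)=B$, $\mathrm{ad}_A^{\,n}=\mathrm{ad}_A\circ\mathrm{ad}_A^{\,n-1}$.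 *)

theory Defs
  imports "HOL-Analysis.Analysis" "HOL-Library.List_Lexorder"
begin

type_synonym site = "nat list"
type_synonym mode = "site \<times> bool"          \<comment> \<open>(x, sigma), spin in C^2\<close>
type_synonym config = "mode set"             \<comment> \<open>occupation-number basis vector\<close>
type_synonym op = "config \<Rightarrow> config \<Rightarrow> complex"  \<comment> \<open>matrix entries <S|O|T>\<close>

text \<open>The torus (Z/LZ)^d, points as coordinate lists.\<close>
definition lattice :: "nat \<Rightarrow> nat \<Rightarrow> site set" where
  "lattice d L = {x. length x = d \<and> (\<forall>i<d. x ! i < L)}"

definition tdist :: "nat \<Rightarrow> site \<Rightarrow> site \<Rightarrow> nat" where
  "tdist L x y = (\<Sum>i<length x. min (nat \<bar>int (x!i) - int (y!i)\<bar>) (L - nat \<bar>int (x!i) - int (y!i)\<bar>))"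

definition diam :: "nat \<Rightarrow> site set \<Rightarrow> nat" where
  "diam L X = Sup {tdist L x y | x y. x \<in> X \<and> y \<in> X}"

definition modes :: "site set \<Rightarrow> mode set" where
  "modes \<Lambda> = \<Lambda> \<times> UNIV"

definition opmult :: "mode set \<Rightarrow> op \<Rightarrow> op \<Rightarrow> op" where
  "opmult M A B = (\<lambda>S T. if S \<subseteq> M \<and> T \<subseteq> M then (\<Sum>U\<in>Pow M. A S U * B U T) else 0)"

definition opid :: "mode set \<Rightarrow> op" where
  "opid M = (\<lambda>S T. if S \<subseteq> M \<and> S = T then 1 else 0)"

definition comm :: "mode set \<Rightarrow> op \<Rightarrow> op \<Rightarrow> op" where
  "comm M A B = (\<lambda>S T. opmult M A B S T - opmult M B A S T)"

text \<open>Jordan--Wigner sign with respect to the (lexicographic) order of modes.\<close>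
definition mode_less :: "mode \<Rightarrow> mode \<Rightarrow> bool" where
  "mode_less m m' \<longleftrightarrow> fst m < fst m' \<or> (fst m = fst m' \<and> snd m < snd m')"

definition jw :: "mode \<Rightarrow> config \<Rightarrow> complex" where
  "jw m T = (-1) ^ card {m'\<in>T. mode_less m' m}"

definition ann :: "mode set \<Rightarrow> mode \<Rightarrow> op" where
  "ann M m = (\<lambda>S T. if T \<subseteq> M \<and> m \<in> T \<and> S = T - {m} then jw m T else 0)"

definition cre :: "mode set \<Rightarrow> mode \<Rightarrow> op" where
  "cre M m = (\<lambda>S T. if T \<subseteq> M \<and> m \<in> M \<and> m \<notin> T \<and> S = insert m T then jw m T else 0)"

inductive_set alg :: "mode set \<Rightarrow> mode set \<Rightarrow> op set" for M Y where
  alg_id: "opid M \<in> alg M Y"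
| alg_ann: "m \<in> Y \<Longrightarrow> ann M m \<in> alg M Y"
| alg_cre: "m \<in> Y \<Longrightarrow> cre M m \<in> alg M Y"
| alg_add: "A \<in> alg M Y \<Longrightarrow> B \<in> alg M Y \<Longrightarrow> (\<lambda>S T. A S T + B S T) \<in> alg M Y"
| alg_smult: "A \<in> alg M Y \<Longrightarrow> (\<lambda>S T. c * A S T) \<in> alg M Y"
| alg_mult: "A \<in> alg M Y \<Longrightarrow> B \<in> alg M Y \<Longrightarrow> opmult M A B \<in> alg M Y"

definition parity :: "mode set \<Rightarrow> op" where
  "parity M = (\<lambda>S T. if S \<subseteq> M \<and> S = T then (-1) ^ card S else 0)"

definition even_op :: "mode set \<Rightarrow> op \<Rightarrow> bool" where
  "even_op M A \<longleftrightarrow> opmult M (parity M) (opmult M A (parity M)) = A"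

definition loc_even :: "site set \<Rightarrow> site set \<Rightarrow> op set" where
  "loc_even \<Lambda> X = {A \<in> alg (modes \<Lambda>) (modes X). even_op (modes \<Lambda>) A}"

definition opnorm :: "mode set \<Rightarrow> op \<Rightarrow> real" where
  "opnorm M A = Sup {sqrt (\<Sum>S\<in>Pow M. (cmod (\<Sum>T\<in>Pow M. A S T * v T))\<^sup>2) | v.
                       (\<Sum>T\<in>Pow M. (cmod (v T))\<^sup>2) \<le> 1}"

type_synonym interaction = "site set \<Rightarrow> op"

definition is_interaction :: "site set \<Rightarrow> interaction \<Rightarrow> bool" where
  "is_interaction \<Lambda> \<Phi> \<longleftrightarrow> (\<forall>X. (X \<subseteq> \<Lambda> \<longrightarrow> \<Phi> X \<in> loc_even \<Lambda> X) \<and> (\<not> X \<subseteq> \<Lambda> \<longrightarrow> \<Phi> X = (\<lambda>S T. 0)))"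

definition finite_range :: "nat \<Rightarrow> site set \<Rightarrow> interaction \<Rightarrow> bool" where
  "finite_range L \<Lambda> \<Phi> \<longleftrightarrow> (\<exists>R. \<forall>X\<subseteq>\<Lambda>. diam L X > R \<longrightarrow> \<Phi> X = (\<lambda>S T. 0))"

definition knorm :: "site set \<Rightarrow> real \<Rightarrow> interaction \<Rightarrow> real" where
  "knorm \<Lambda> \<kappa> \<Phi> = (SUP x\<in>\<Lambda>. \<Sum>X\<in>{X. X \<subseteq> \<Lambda> \<and> x \<in> X}. exp (\<kappa> * real (card X)) * opnorm (modes \<Lambda>) (\<Phi> X))"

definition ssize :: "site set \<Rightarrow> interaction \<Rightarrow> nat" where
  "ssize \<Lambda> \<Phi> = Sup {card X | X. X \<subseteq> \<Lambda> \<and> \<Phi> X \<noteq> (\<lambda>S T. 0)}"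

definition ad :: "site set \<Rightarrow> interaction \<Rightarrow> interaction \<Rightarrow> interaction" where
  "ad \<Lambda> A B = (\<lambda>Z S T. \<Sum>(X,Y)\<in>{(X,Y). X \<subseteq> \<Lambda> \<and> Y \<subseteq> \<Lambda> \<and> X \<union> Y = Z}.
                       comm (modes \<Lambda>) (A X) (B Y) S T)"

text \<open>n-th partial sum of sum_{n>=1} ad_A^n(B)/n!, and its (componentwise) limit e^A B e^-A - B.\<close>
definition bch_partial :: "site set \<Rightarrow> interaction \<Rightarrow> interaction \<Rightarrow> nat \<Rightarrow> interaction" where
  "bch_partial \<Lambda> A B N = (\<lambda>X S T. \<Sum>n\<in>{1..N}. ((ad \<Lambda> A ^^ n) B) X S T / of_real (fact n))"

definition bch :: "site set \<Rightarrow> interaction \<Rightarrow> interaction \<Rightarrow> interaction" where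
  "bch \<Lambda> A B = (\<lambda>X S T. \<Sum>n. ((ad \<Lambda> A ^^ Suc n) B) X S T / of_real (fact (Suc n)))"

end

(* A creation or annihilation operator anticommutes with the generators of all other modes, so
   even operators on disjoint sets of modes commute and [A_X, B_Y] = 0 unless X and Y overlap.
   Consequently ad_A(B) has interaction size at most s(A) + s(B), and since
   e^(\<kappa>|X \<union> Y|) \<le> e^(\<kappa>|X|) e^(\<kappa>|Y|), sorting the overlapping pairs (X, Y) with x \<in> X \<union> Y by
   whether x lies in X or in Y gives \<parallel>ad_A(B)\<parallel> \<le> 2 (s(A) + s(B)) \<parallel>A\<parallel> \<parallel>B\<parallel> in the \<kappa>-norm.
   Iterating, \<parallel>ad_A^n(B)\<parallel> / n! \<le> C(n + s(B), n) (2 s(A) \<parallel>A\<parallel>)^n \<parallel>B\<parallel>, and the negative binomial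
   series \<Sum>_n C(n + s, n) \<rho>^n = (1 - \<rho>)^-(s+1) gives the constant.  On the finite torus the
   \<kappa>-norm dominates every matrix entry, so the entrywise series defining e^A B e^-A - B converges
   in the \<kappa>-norm as well. *)

theory Submission
  imports Defs
begin

section \<open>Products and parity conjugation of operators\<close>

definition supported :: "mode set \<Rightarrow> op \<Rightarrow> bool" where
  "supported M A \<longleftrightarrow> (\<forall>S T. A S T \<noteq> 0 \<longrightarrow> S \<subseteq> M \<and> T \<subseteq> M)"

lemma alg_supported: "A \<in> alg M Y \<Longrightarrow> supported M A"
proof (induction rule: alg.induct)
  case (alg_add A B)
  then show ?case
    unfolding supported_def by (metis add.right_neutral add_0)
qed (auto simp: supported_def opid_def ann_def cre_def opmult_def)

lemma alg_mono: "A \<in> alg M Y \<Longrightarrow> Y \<subseteq> Y' \<Longrightarrow> A \<in> alg M Y'"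
  by (induction rule: alg.induct) (auto intro: alg.intros)

lemma alg_comm: "A \<in> alg M Y \<Longrightarrow> B \<in> alg M Y \<Longrightarrow> comm M A B \<in> alg M Y"
  using alg.alg_add[OF alg.alg_mult alg.alg_smult[OF alg.alg_mult], of A M Y B B A "-1"]
  by (simp add: comm_def)

lemma alg_sum:
  "finite P \<Longrightarrow> (\<And>p. p \<in> P \<Longrightarrow> f p \<in> alg M Y) \<Longrightarrow> (\<lambda>S T. \<Sum>p\<in>P. f p S T) \<in> alg M Y"
proof (induction P rule: finite_induct)
  case empty
  show ?case
    using alg.alg_smult[OF alg.alg_id, of 0] by simp
next
  case (insert p P)
  then show ?case
    using alg.alg_add[of "f p" M Y "\<lambda>S T. \<Sum>p\<in>P. f p S T"] by simp
qed

lemma opmult_assoc: "opmult M (opmult M A B) C = opmult M A (opmult M B C)"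
  by (auto simp: opmult_def sum_distrib_left sum_distrib_right mult.assoc fun_eq_iff
      intro: sum.swap)

lemma opmult_add_right:
  "opmult M A (\<lambda>S T. B S T + C S T) = (\<lambda>S T. opmult M A B S T + opmult M A C S T)"
  by (auto simp: opmult_def distrib_left sum.distrib fun_eq_iff)

lemma opmult_add_left:
  "opmult M (\<lambda>S T. B S T + C S T) A = (\<lambda>S T. opmult M B A S T + opmult M C A S T)"
  by (auto simp: opmult_def distrib_right sum.distrib fun_eq_iff)

lemma opmult_smult_right: "opmult M A (\<lambda>S T. c * B S T) = (\<lambda>S T. c * opmult M A B S T)"
  by (auto simp: opmult_def sum_distrib_left ac_simps fun_eq_iff)

lemma opmult_smult_left: "opmult M (\<lambda>S T. c * B S T) A = (\<lambda>S T. c * opmult M B A S T)"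
  by (auto simp: opmult_def sum_distrib_left ac_simps fun_eq_iff)

lemma opmult_uminus_left: "opmult M (\<lambda>S T. - B S T) A = (\<lambda>S T. - opmult M B A S T)"
  by (auto simp: opmult_def sum_negf fun_eq_iff)

lemma opmult_opid_left: "finite M \<Longrightarrow> supported M B \<Longrightarrow> opmult M (opid M) B = B"
  by (auto simp: opmult_def opid_def supported_def fun_eq_iff if_distrib if_distribR sum.delta
      cong: if_cong)

lemma opmult_opid_right: "finite M \<Longrightarrow> supported M B \<Longrightarrow> opmult M B (opid M) = B"
  by (auto simp: opmult_def opid_def supported_def fun_eq_iff if_distrib if_distribR sum.delta'
      cong: if_cong)

lemma opmult_parity_left:
  "finite M \<Longrightarrow> opmult M (parity M) A S T = (if S \<subseteq> M \<and> T \<subseteq> M then (-1) ^ card S * A S T else 0)"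
  by (auto simp: opmult_def parity_def if_distrib if_distribR sum.delta cong: if_cong)

lemma opmult_parity_right:
  "finite M \<Longrightarrow> opmult M A (parity M) S T = (if S \<subseteq> M \<and> T \<subseteq> M then A S T * (-1) ^ card T else 0)"
  by (auto simp: opmult_def parity_def if_distrib if_distribR sum.delta' cong: if_cong)

definition parity_conj :: "mode set \<Rightarrow> op \<Rightarrow> op" where
  "parity_conj M A = opmult M (parity M) (opmult M A (parity M))"

lemma even_op_iff_parity_conj: "even_op M A \<longleftrightarrow> parity_conj M A = A"
  by (simp add: even_op_def parity_conj_def)

lemma parity_conj_eq: "finite M \<Longrightarrow>
  parity_conj M A = (\<lambda>S T. if S \<subseteq> M \<and> T \<subseteq> M then (-1) ^ (card S + card T) * A S T else 0)"
  by (auto simp: parity_conj_def opmult_parity_left opmult_parity_right power_add fun_eq_iff)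

lemma parity_conj_supported:
  "finite M \<Longrightarrow> supported M A \<Longrightarrow> parity_conj M A = (\<lambda>S T. (-1) ^ (card S + card T) * A S T)"
  by (auto simp: parity_conj_eq supported_def fun_eq_iff)

lemma parity_conj_opmult:
  assumes "finite M"
  shows "parity_conj M (opmult M A B) = opmult M (parity_conj M A) (parity_conj M B)"
proof -
  have sign: "(-1::complex) ^ (a + b) * (-1) ^ (b + c) = (-1) ^ (a + c)" for a b c :: nat
    by (simp add: power_add flip: power_mult_distrib)
  show ?thesis
    by (auto simp: parity_conj_eq[OF assms] opmult_def sum_distrib_left fun_eq_iff
        intro!: sum.cong simp flip: sign)
qed

lemma parity_conj_add:
  "finite M \<Longrightarrow>
    parity_conj M (\<lambda>S T. A S T + B S T) = (\<lambda>S T. parity_conj M A S T + parity_conj M B S T)"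
  by (auto simp: parity_conj_eq distrib_left fun_eq_iff)

lemma parity_conj_smult:
  "finite M \<Longrightarrow> parity_conj M (\<lambda>S T. c * A S T) = (\<lambda>S T. c * parity_conj M A S T)"
  by (auto simp: parity_conj_eq fun_eq_iff)

lemma parity_conj_sum:
  "finite M \<Longrightarrow> parity_conj M (\<lambda>S T. \<Sum>p\<in>P. f p S T) = (\<lambda>S T. \<Sum>p\<in>P. parity_conj M (f p) S T)"
proof (intro ext)
  fix S T
  assume "finite M"
  then show "parity_conj M (\<lambda>S T. \<Sum>p\<in>P. f p S T) S T = (\<Sum>p\<in>P. parity_conj M (f p) S T)"
    by (cases "S \<subseteq> M"; cases "T \<subseteq> M") (simp_all add: parity_conj_eq sum_distrib_left)
qed

lemma parity_conj_opid: "finite M \<Longrightarrow> parity_conj M (opid M) = opid M"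
  by (auto simp: parity_conj_eq opid_def fun_eq_iff simp flip: mult_2)

lemma parity_conj_comm:
  assumes "finite M"
  shows "parity_conj M (comm M A B) = comm M (parity_conj M A) (parity_conj M B)"
proof -
  have "comm M X Y = (\<lambda>S T. opmult M X Y S T + (-1) * opmult M Y X S T)" for X Y
    by (simp add: comm_def fun_eq_iff)
  then show ?thesis
    by (simp only: parity_conj_add[OF assms] parity_conj_smult[OF assms]
        parity_conj_opmult[OF assms])
qed

section \<open>Even operators on disjoint modes commute\<close>

lemma jw_insert:
  assumes "finite T" "m' \<notin> T"
  shows "jw m (insert m' T) = (if mode_less m' m then - jw m T else jw m T)"
proof -
  have "{m''\<in>insert m' T. mode_less m'' m} =
        (if mode_less m' m then insert m' {m''\<in>T. mode_less m'' m} else {m''\<in>T. mode_less m'' m})"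
    by auto
  then show ?thesis
    using assms by (simp add: jw_def)
qed

lemma jw_toggle:
  assumes "finite T" and "T' - {m'} = T - {m'}" and "m' \<in> T' \<longleftrightarrow> m' \<notin> T"
  shows "jw m T' = (if mode_less m' m then - jw m T else jw m T)"
proof (cases "m' \<in> T")
  case True
  then have "T = insert m' T'" "m' \<notin> T'" "finite T'"
    using assms by (auto dest: finite_subset[of T' "insert m' T"])
  then show ?thesis
    using jw_insert[of T' m' m] by auto
next
  case False
  then have "T' = insert m' T"
    using assms by blast
  then show ?thesis
    using jw_insert[OF assms(1) False] by simp
qed

text \<open>Of two distinct modes exactly one precedes the other in the Jordan--Wigner order.\<close>
lemma jw_toggle_anticomm:
  assumes "finite T" "m \<noteq> m'"
    and "T1 - {m'} = T - {m'}" "m' \<in> T1 \<longleftrightarrow> m' \<notin> T"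
    and "T2 - {m} = T - {m}" "m \<in> T2 \<longleftrightarrow> m \<notin> T"
  shows "jw m T1 * jw m' T = - (jw m' T2 * jw m T)"
proof -
  have "mode_less m m' \<longleftrightarrow> \<not> mode_less m' m"
    using \<open>m \<noteq> m'\<close> by (cases m; cases m') (auto simp: mode_less_def)
  then show ?thesis
    using jw_toggle[OF assms(1,3,4), of m] jw_toggle[OF assms(1,5,6), of m'] by auto
qed

lemma opmult_ann_right:
  assumes "finite M"
  shows "opmult M A (ann M m) S T =
     (if S \<subseteq> M \<and> T \<subseteq> M \<and> m \<in> T then A S (T - {m}) * jw m T else 0)"
proof -
  have "opmult M A (ann M m) S T =
      (if S \<subseteq> M \<and> T \<subseteq> M \<and> m \<in> T then \<Sum>U\<in>Pow M. if U = T - {m} then A S U * jw m T else 0 else 0)"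
    by (auto simp: opmult_def ann_def intro!: sum.cong)
  then show ?thesis
    using assms by auto
qed

lemma opmult_cre_right:
  assumes "finite M"
  shows "opmult M A (cre M m) S T =
     (if S \<subseteq> M \<and> T \<subseteq> M \<and> m \<in> M \<and> m \<notin> T then A S (insert m T) * jw m T else 0)"
proof -
  have "opmult M A (cre M m) S T =
      (if S \<subseteq> M \<and> T \<subseteq> M \<and> m \<in> M \<and> m \<notin> T
       then \<Sum>U\<in>Pow M. if U = insert m T then A S U * jw m T else 0 else 0)"
    by (auto simp: opmult_def cre_def intro!: sum.cong)
  then show ?thesis
    using assms by auto
qed

lemma ann_ann_anticomm:
  assumes "finite M" "m \<noteq> m'"
  shows "opmult M (ann M m) (ann M m') S T = - opmult M (ann M m') (ann M m) S T"
proof -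
  define nonzero where "nonzero \<longleftrightarrow> S \<subseteq> M \<and> T \<subseteq> M \<and> m \<in> T \<and> m' \<in> T \<and> S = T - {m} - {m'}"
  have reorder: "T - {m'} - {m} = T - {m} - {m'}"
    by blast
  have "opmult M (ann M m) (ann M m') S T = (if nonzero then jw m (T - {m'}) * jw m' T else 0)"
    unfolding opmult_ann_right[OF assms(1)] unfolding nonzero_def ann_def reorder
    using assms(2) by auto
  moreover have
    "opmult M (ann M m') (ann M m) S T = (if nonzero then jw m' (T - {m}) * jw m T else 0)"
    unfolding opmult_ann_right[OF assms(1)] unfolding nonzero_def ann_def using assms(2) by auto
  moreover have "finite T" if nonzero
    using that assms(1) by (auto simp: nonzero_def dest: finite_subset)
  ultimately show ?thesis
    using assms(2) jw_toggle_anticomm[of T m m' "T - {m'}" "T - {m}"] by (auto simp: nonzero_def)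
qed

lemma cre_cre_anticomm:
  assumes "finite M" "m \<noteq> m'"
  shows "opmult M (cre M m) (cre M m') S T = - opmult M (cre M m') (cre M m) S T"
proof -
  define nonzero where "nonzero \<longleftrightarrow> S \<subseteq> M \<and> T \<subseteq> M \<and> m \<in> M \<and> m' \<in> M \<and> m \<notin> T \<and> m' \<notin> T \<and>
    S = insert m (insert m' T)"
  have reorder: "insert m' (insert m T) = insert m (insert m' T)"
    by blast
  have "opmult M (cre M m) (cre M m') S T = (if nonzero then jw m (insert m' T) * jw m' T else 0)"
    unfolding opmult_cre_right[OF assms(1)] unfolding nonzero_def cre_def using assms(2) by auto
  moreover have
    "opmult M (cre M m') (cre M m) S T = (if nonzero then jw m' (insert m T) * jw m T else 0)"
    unfolding opmult_cre_right[OF assms(1)] unfolding nonzero_def cre_def reorder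
    using assms(2) by auto
  moreover have "finite T" if nonzero
    using that assms(1) by (auto simp: nonzero_def dest: finite_subset)
  ultimately show ?thesis
    using assms(2) jw_toggle_anticomm[of T m m' "insert m' T" "insert m T"]
    by (auto simp: nonzero_def)
qed

lemma ann_cre_anticomm:
  assumes "finite M" "m \<noteq> m'"
  shows "opmult M (ann M m) (cre M m') S T = - opmult M (cre M m') (ann M m) S T"
proof -
  define nonzero where "nonzero \<longleftrightarrow> S \<subseteq> M \<and> T \<subseteq> M \<and> m \<in> T \<and> m' \<in> M \<and> m' \<notin> T \<and>
    S = insert m' (T - {m})"
  have reorder: "insert m' T - {m} = insert m' (T - {m})"
    using assms(2) by blast
  have "opmult M (ann M m) (cre M m') S T = (if nonzero then jw m (insert m' T) * jw m' T else 0)"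
    unfolding opmult_cre_right[OF assms(1)] unfolding nonzero_def ann_def reorder
    using assms(2) by auto
  moreover have
    "opmult M (cre M m') (ann M m) S T = (if nonzero then jw m' (T - {m}) * jw m T else 0)"
    unfolding opmult_ann_right[OF assms(1)] unfolding nonzero_def cre_def using assms(2) by auto
  moreover have "finite T" if nonzero
    using that assms(1) by (auto simp: nonzero_def dest: finite_subset)
  ultimately show ?thesis
    using assms(2) jw_toggle_anticomm[of T m m' "insert m' T" "T - {m}"] by (auto simp: nonzero_def)
qed

definition is_generator :: "mode set \<Rightarrow> mode \<Rightarrow> op \<Rightarrow> bool" where
  "is_generator M m g \<longleftrightarrow> g = ann M m \<or> g = cre M m"

lemma generator_anticomm:
  assumes "finite M" "m \<noteq> m'" "is_generator M m g" "is_generator M m' h"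
  shows "opmult M g h = (\<lambda>S T. - opmult M h g S T)"
  using assms(3,4) ann_cre_anticomm[OF assms(1) assms(2)[symmetric]]
  unfolding is_generator_def
  by (elim disjE; clarify; simp add: fun_eq_iff ann_ann_anticomm[OF assms(1,2)]
      cre_cre_anticomm[OF assms(1,2)] ann_cre_anticomm[OF assms(1,2)])

lemma generator_supported: "is_generator M m g \<Longrightarrow> supported M g"
  using alg_supported[OF alg.alg_ann[of m "{m}"]] alg_supported[OF alg.alg_cre[of m "{m}"]]
  by (auto simp: is_generator_def)

text \<open>A generator changes the particle number by one, so it is odd under the parity.\<close>
lemma parity_conj_generator:
  assumes "finite M" "is_generator M m g"
  shows "parity_conj M g = (\<lambda>S T. - g S T)"
proof -
  have "(-1) ^ (card S + card T) * g S T = - g S T" for S T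
  proof (cases "g S T = 0")
    case False
    then have "finite T"
      using generator_supported[OF assms(2)] assms(1)
      by (auto simp: supported_def dest: finite_subset)
    with False assms(2) have "odd (card S + card T)"
      by (auto simp: is_generator_def ann_def cre_def card_Suc_Diff1 split: if_splits)
    then show ?thesis
      by simp
  qed simp
  then show ?thesis
    using parity_conj_supported[OF assms(1) generator_supported[OF assms(2)]] by simp
qed

lemma generator_opmult_commute:
  assumes fin: "finite M" and g: "is_generator M m g" and m: "m \<notin> Y"
  shows "B \<in> alg M Y \<Longrightarrow> opmult M g B = opmult M (parity_conj M B) g"
proof (induction rule: alg.induct)
  case alg_id
  show ?case
    using generator_supported[OF g] fin
    by (simp add: parity_conj_opid opmult_opid_left opmult_opid_right)
next
  case (alg_ann m')
  then have "m \<noteq> m'" "is_generator M m' (ann M m')"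
    using m by (auto simp: is_generator_def)
  then show ?case
    using generator_anticomm[OF fin _ g] parity_conj_generator[OF fin]
    by (simp add: opmult_uminus_left)
next
  case (alg_cre m')
  then have "m \<noteq> m'" "is_generator M m' (cre M m')"
    using m by (auto simp: is_generator_def)
  then show ?case
    using generator_anticomm[OF fin _ g] parity_conj_generator[OF fin]
    by (simp add: opmult_uminus_left)
next
  case (alg_add A B)
  then show ?case
    by (simp add: opmult_add_right opmult_add_left parity_conj_add[OF fin])
next
  case (alg_smult A c)
  then show ?case
    by (simp add: opmult_smult_right opmult_smult_left parity_conj_smult[OF fin])
next
  case (alg_mult A B)
  have "opmult M g (opmult M A B) = opmult M (opmult M g A) B"
    by (simp add: opmult_assoc)
  also have "\<dots> = opmult M (parity_conj M A) (opmult M g B)"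
    using alg_mult by (simp add: opmult_assoc)
  also have "\<dots> = opmult M (parity_conj M (opmult M A B)) g"
    using alg_mult by (simp add: opmult_assoc parity_conj_opmult[OF fin])
  finally show ?case .
qed

lemma even_opmult_commute:
  assumes fin: "finite M" and disj: "Y1 \<inter> Y2 = {}"
    and B: "B \<in> alg M Y2" and even: "parity_conj M B = B"
  shows "A \<in> alg M Y1 \<Longrightarrow> opmult M A B = opmult M B A"
proof (induction rule: alg.induct)
  case alg_id
  show ?case
    using alg_supported[OF B] fin by (simp add: opmult_opid_left opmult_opid_right)
next
  case (alg_ann m)
  then have "m \<notin> Y2"
    using disj by blast
  then show ?case
    by (metis generator_opmult_commute[OF fin _ _ B] even is_generator_def)
next
  case (alg_cre m)
  then have "m \<notin> Y2"
    using disj by blast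
  then show ?case
    by (metis generator_opmult_commute[OF fin _ _ B] even is_generator_def)
next
  case (alg_add A1 A2)
  then show ?case
    by (simp add: opmult_add_right opmult_add_left)
next
  case (alg_smult A c)
  then show ?case
    by (simp add: opmult_smult_right opmult_smult_left)
next
  case (alg_mult A1 A2)
  have "opmult M (opmult M A1 A2) B = opmult M A1 (opmult M B A2)"
    using alg_mult by (simp add: opmult_assoc)
  also have "\<dots> = opmult M B (opmult M A1 A2)"
    using alg_mult by (simp flip: opmult_assoc)
  finally show ?case .
qed

section \<open>The operator norm\<close>

definition opapply :: "mode set \<Rightarrow> op \<Rightarrow> (config \<Rightarrow> complex) \<Rightarrow> config \<Rightarrow> complex" where
  "opapply M A v = (\<lambda>S. \<Sum>T\<in>Pow M. A S T * v T)"

definition vnorm :: "mode set \<Rightarrow> (config \<Rightarrow> complex) \<Rightarrow> real" where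
  "vnorm M v = L2_set (\<lambda>S. cmod (v S)) (Pow M)"

definition entry_l1 :: "mode set \<Rightarrow> op \<Rightarrow> real" where
  "entry_l1 M A = (\<Sum>S\<in>Pow M. \<Sum>T\<in>Pow M. cmod (A S T))"

lemma opnorm_eq_Sup: "opnorm M A = Sup {vnorm M (opapply M A v) | v. vnorm M v \<le> 1}"
  by (simp add: opnorm_def vnorm_def opapply_def L2_set_def)

lemma vnorm_nonneg: "0 \<le> vnorm M v"
  by (simp add: vnorm_def)

lemma vnorm_scale: "vnorm M (\<lambda>S. c * v S) = cmod c * vnorm M v"
  by (simp add: vnorm_def L2_set_right_distrib norm_mult)

lemma vnorm_add_le: "vnorm M (\<lambda>S. v S + w S) \<le> vnorm M v + vnorm M w"
proof -
  have "vnorm M (\<lambda>S. v S + w S) \<le> L2_set (\<lambda>S. cmod (v S) + cmod (w S)) (Pow M)"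
    unfolding vnorm_def by (rule L2_set_mono) (auto intro: norm_triangle_ineq)
  also have "\<dots> \<le> vnorm M v + vnorm M w"
    unfolding vnorm_def by (rule L2_set_triangle_ineq)
  finally show ?thesis .
qed

lemma cmod_le_vnorm: "finite M \<Longrightarrow> T \<subseteq> M \<Longrightarrow> cmod (v T) \<le> vnorm M v"
  unfolding vnorm_def by (rule member_le_L2_set) auto

lemma vnorm_opapply_le_entry_l1:
  assumes "finite M" "vnorm M v \<le> 1"
  shows "vnorm M (opapply M A v) \<le> entry_l1 M A"
proof -
  have "cmod (opapply M A v S) \<le> (\<Sum>T\<in>Pow M. cmod (A S T))" for S
  proof -
    have "cmod (opapply M A v S) \<le> (\<Sum>T\<in>Pow M. cmod (A S T) * cmod (v T))"
      unfolding opapply_def by (rule order_trans[OF norm_sum]) (simp add: norm_mult)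
    also have "\<dots> \<le> (\<Sum>T\<in>Pow M. cmod (A S T))"
      using cmod_le_vnorm[OF assms(1)] assms(2)
      by (intro sum_mono mult_left_le) (auto intro: order_trans)
    finally show ?thesis .
  qed
  then have "(\<Sum>S\<in>Pow M. cmod (opapply M A v S)) \<le> entry_l1 M A"
    unfolding entry_l1_def by (rule sum_mono)
  moreover have "vnorm M (opapply M A v) \<le> (\<Sum>S\<in>Pow M. cmod (opapply M A v S))"
    unfolding vnorm_def by (rule L2_set_le_sum) simp
  ultimately show ?thesis
    by linarith
qed

lemma vnorm_opapply_le_opnorm:
  assumes "finite M" "vnorm M v \<le> 1"
  shows "vnorm M (opapply M A v) \<le> opnorm M A"
  unfolding opnorm_eq_Sup
  using assms vnorm_opapply_le_entry_l1[OF assms(1)]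
  by (intro cSup_upper bdd_aboveI[where M = "entry_l1 M A"]) auto

lemma opnorm_leI:
  assumes "\<And>v. vnorm M v \<le> 1 \<Longrightarrow> vnorm M (opapply M A v) \<le> K"
  shows "opnorm M A \<le> K"
proof -
  have "vnorm M (\<lambda>S. 0) \<le> 1"
    by (simp add: vnorm_def L2_set_0')
  then show ?thesis
    unfolding opnorm_eq_Sup by (intro cSup_least) (use assms in auto)
qed

lemma opnorm_nonneg: "finite M \<Longrightarrow> 0 \<le> opnorm M A"
  using vnorm_opapply_le_opnorm[of M "\<lambda>S. 0" A] by (simp add: vnorm_def opapply_def L2_set_0')

lemma opnorm_le_entry_l1: "finite M \<Longrightarrow> opnorm M A \<le> entry_l1 M A"
  by (intro opnorm_leI vnorm_opapply_le_entry_l1)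

lemma vnorm_opapply_le:
  assumes "finite M"
  shows "vnorm M (opapply M A v) \<le> opnorm M A * vnorm M v"
proof (cases "vnorm M v = 0")
  case True
  then have "v T = 0" if "T \<subseteq> M" for T
    using cmod_le_vnorm[OF assms that, of v] by simp
  then have "opapply M A v = (\<lambda>S. 0)"
    by (auto simp: opapply_def fun_eq_iff)
  then show ?thesis
    using True by (simp add: vnorm_def L2_set_0')
next
  case False
  define r where "r = vnorm M v"
  have r: "0 < r"
    using False vnorm_nonneg[of M v] by (simp add: r_def)
  define c where "c = complex_of_real (1 / r)"
  have c: "cmod c = 1 / r"
    using r by (simp add: c_def norm_divide)
  have "vnorm M (\<lambda>T. c * v T) = 1"
    using r by (simp add: vnorm_scale c r_def)
  then have "vnorm M (opapply M A (\<lambda>T. c * v T)) \<le> opnorm M A"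
    by (intro vnorm_opapply_le_opnorm assms) simp
  moreover have "opapply M A (\<lambda>T. c * v T) = (\<lambda>S. c * opapply M A v S)"
    by (simp add: opapply_def sum_distrib_left ac_simps)
  ultimately have "vnorm M (opapply M A v) / r \<le> opnorm M A"
    by (simp add: vnorm_scale c)
  then show ?thesis
    using r by (simp add: r_def pos_divide_le_eq)
qed

lemma opapply_opmult:
  assumes "S \<subseteq> M"
  shows "opapply M (opmult M A B) v S = opapply M A (opapply M B v) S"
proof -
  have "opapply M (opmult M A B) v S = (\<Sum>T\<in>Pow M. \<Sum>U\<in>Pow M. A S U * B U T * v T)"
    using assms by (auto simp: opapply_def opmult_def sum_distrib_right intro!: sum.cong)
  also have "\<dots> = (\<Sum>U\<in>Pow M. \<Sum>T\<in>Pow M. A S U * B U T * v T)"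
    by (rule sum.swap)
  also have "\<dots> = opapply M A (opapply M B v) S"
    by (simp add: opapply_def sum_distrib_left mult.assoc)
  finally show ?thesis .
qed

lemma opnorm_add:
  assumes "finite M"
  shows "opnorm M (\<lambda>S T. A S T + B S T) \<le> opnorm M A + opnorm M B"
proof (rule opnorm_leI)
  fix v
  assume v: "vnorm M v \<le> 1"
  have "vnorm M (opapply M (\<lambda>S T. A S T + B S T) v)
      \<le> vnorm M (opapply M A v) + vnorm M (opapply M B v)"
    using vnorm_add_le by (simp add: opapply_def distrib_right sum.distrib)
  also have "\<dots> \<le> opnorm M A + opnorm M B"
    by (intro add_mono vnorm_opapply_le_opnorm assms v)
  finally show "vnorm M (opapply M (\<lambda>S T. A S T + B S T) v) \<le> opnorm M A + opnorm M B" .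
qed

lemma opnorm_smult:
  assumes "finite M"
  shows "opnorm M (\<lambda>S T. c * A S T) \<le> cmod c * opnorm M A"
proof (rule opnorm_leI)
  fix v
  assume "vnorm M v \<le> 1"
  then have "cmod c * vnorm M (opapply M A v) \<le> cmod c * opnorm M A"
    by (intro mult_left_mono vnorm_opapply_le_opnorm assms) auto
  moreover have "opapply M (\<lambda>S T. c * A S T) v = (\<lambda>S. c * opapply M A v S)"
    by (simp add: opapply_def sum_distrib_left mult.assoc)
  ultimately show "vnorm M (opapply M (\<lambda>S T. c * A S T) v) \<le> cmod c * opnorm M A"
    by (simp add: vnorm_scale)
qed

lemma opnorm_opmult:
  assumes "finite M"
  shows "opnorm M (opmult M A B) \<le> opnorm M A * opnorm M B"
proof (rule opnorm_leI)
  fix v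
  assume v: "vnorm M v \<le> 1"
  have "vnorm M (opapply M (opmult M A B) v) = vnorm M (opapply M A (opapply M B v))"
    unfolding vnorm_def by (rule L2_set_cong) (auto simp: opapply_opmult)
  also have "\<dots> \<le> opnorm M A * vnorm M (opapply M B v)"
    by (rule vnorm_opapply_le[OF assms])
  also have "\<dots> \<le> opnorm M A * opnorm M B"
    by (intro mult_left_mono vnorm_opapply_le_opnorm opnorm_nonneg assms v)
  finally show "vnorm M (opapply M (opmult M A B) v) \<le> opnorm M A * opnorm M B" .
qed

lemma opnorm_comm:
  assumes "finite M"
  shows "opnorm M (comm M A B) \<le> 2 * opnorm M A * opnorm M B"
proof -
  have "opnorm M (comm M A B) \<le> opnorm M (opmult M A B) + opnorm M (\<lambda>S T. (-1) * opmult M B A S T)"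
    using opnorm_add[OF assms, of "opmult M A B" "\<lambda>S T. (-1) * opmult M B A S T"]
    by (simp add: comm_def)
  also have "\<dots> \<le> opnorm M (opmult M A B) + opnorm M (opmult M B A)"
    using opnorm_smult[OF assms, of "-1" "opmult M B A"] by simp
  also have "\<dots> \<le> opnorm M A * opnorm M B + opnorm M B * opnorm M A"
    by (intro add_mono opnorm_opmult assms)
  finally show ?thesis
    by (simp add: algebra_simps)
qed

lemma cmod_le_opnorm:
  assumes "finite M" "S \<subseteq> M" "T \<subseteq> M"
  shows "cmod (A S T) \<le> opnorm M A"
proof -
  define v where "v U = (if U = T then 1 else 0 :: complex)" for U
  have "vnorm M v = 1"
    using assms by (simp add: vnorm_def L2_set_def v_def if_distrib[of cmod] if_distrib[of power2]
        sum.delta' cong: if_cong)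
  moreover have "opapply M A v = (\<lambda>S. A S T)"
    using assms by (simp add: opapply_def v_def if_distrib[of "(*) _"] sum.delta' cong: if_cong)
  ultimately show ?thesis
    using cmod_le_vnorm[OF assms(1,2), of "opapply M A v"]
      vnorm_opapply_le_opnorm[OF assms(1), of v A]
    by simp
qed

lemma opnorm_zero: "finite M \<Longrightarrow> opnorm M (\<lambda>S T. 0) = 0"
  using opnorm_nonneg[of M "\<lambda>S T. 0"] opnorm_leI[of M "\<lambda>S T. 0" 0]
  by (simp add: opapply_def vnorm_def L2_set_0')

lemma opnorm_sum:
  assumes "finite M"
  shows "opnorm M (\<lambda>S T. \<Sum>p\<in>P. f p S T) \<le> (\<Sum>p\<in>P. opnorm M (f p))"
proof (induction P rule: infinite_finite_induct)
  case (insert p P)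
  then show ?case
    using opnorm_add[OF assms, of "f p" "\<lambda>S T. \<Sum>p\<in>P. f p S T"] by simp
qed (simp_all add: opnorm_zero[OF assms])

section \<open>The \<open>\<kappa>\<close>-norm of interactions\<close>

lemma finite_modes: "finite \<Lambda> \<Longrightarrow> finite (modes \<Lambda>)"
  by (simp add: modes_def)

lemma modes_mono: "X \<subseteq> Y \<Longrightarrow> modes X \<subseteq> modes Y"
  by (auto simp: modes_def)

lemma modes_disjoint: "X \<inter> Y = {} \<Longrightarrow> modes X \<inter> modes Y = {}"
  by (auto simp: modes_def)

definition kweight :: "real \<Rightarrow> site set \<Rightarrow> real" where
  "kweight \<kappa> X = exp (\<kappa> * real (card X))"

definition wnorm :: "site set \<Rightarrow> real \<Rightarrow> interaction \<Rightarrow> site set \<Rightarrow> real" where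
  "wnorm \<Lambda> \<kappa> \<Phi> X = kweight \<kappa> X * opnorm (modes \<Lambda>) (\<Phi> X)"

definition knorm_at :: "site set \<Rightarrow> real \<Rightarrow> interaction \<Rightarrow> site \<Rightarrow> real" where
  "knorm_at \<Lambda> \<kappa> \<Phi> x = (\<Sum>X | X \<subseteq> \<Lambda> \<and> x \<in> X. wnorm \<Lambda> \<kappa> \<Phi> X)"

lemma knorm_eq_SUP: "knorm \<Lambda> \<kappa> \<Phi> = (SUP x\<in>\<Lambda>. knorm_at \<Lambda> \<kappa> \<Phi> x)"
  by (simp add: knorm_def knorm_at_def wnorm_def kweight_def)

lemma kweight_pos: "0 < kweight \<kappa> X"
  by (simp add: kweight_def)

lemma kweight_ge_1: "0 \<le> \<kappa> \<Longrightarrow> 1 \<le> kweight \<kappa> X"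
  by (simp add: kweight_def)

lemma kweight_Un_le:
  assumes "0 \<le> \<kappa>"
  shows "kweight \<kappa> (X \<union> Y) \<le> kweight \<kappa> X * kweight \<kappa> Y"
proof -
  have "\<kappa> * real (card (X \<union> Y)) \<le> \<kappa> * real (card X) + \<kappa> * real (card Y)"
    using assms(1) card_Un_le[of X Y] by (simp flip: distrib_left add: mult_left_mono)
  then show ?thesis
    by (simp add: kweight_def flip: exp_add)
qed

lemma wnorm_nonneg: "finite \<Lambda> \<Longrightarrow> 0 \<le> wnorm \<Lambda> \<kappa> \<Phi> X"
  by (simp add: wnorm_def kweight_pos opnorm_nonneg finite_modes less_imp_le)

lemma knorm_at_nonneg: "finite \<Lambda> \<Longrightarrow> 0 \<le> knorm_at \<Lambda> \<kappa> \<Phi> x"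
  by (simp add: knorm_at_def wnorm_nonneg sum_nonneg)

lemma knorm_at_le_knorm: "finite \<Lambda> \<Longrightarrow> x \<in> \<Lambda> \<Longrightarrow> knorm_at \<Lambda> \<kappa> \<Phi> x \<le> knorm \<Lambda> \<kappa> \<Phi>"
  unfolding knorm_eq_SUP by (rule cSUP_upper) auto

lemma knorm_leI: "\<Lambda> \<noteq> {} \<Longrightarrow> (\<And>x. x \<in> \<Lambda> \<Longrightarrow> knorm_at \<Lambda> \<kappa> \<Phi> x \<le> K) \<Longrightarrow> knorm \<Lambda> \<kappa> \<Phi> \<le> K"
  unfolding knorm_eq_SUP by (rule cSUP_least)

lemma knorm_nonneg: "finite \<Lambda> \<Longrightarrow> \<Lambda> \<noteq> {} \<Longrightarrow> 0 \<le> knorm \<Lambda> \<kappa> \<Phi>"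
  using knorm_at_nonneg knorm_at_le_knorm by (meson all_not_in_conv order_trans)

lemma knorm_add:
  assumes "finite \<Lambda>" "\<Lambda> \<noteq> {}"
  shows "knorm \<Lambda> \<kappa> (\<lambda>X S T. \<Phi> X S T + \<Psi> X S T) \<le> knorm \<Lambda> \<kappa> \<Phi> + knorm \<Lambda> \<kappa> \<Psi>"
proof (rule knorm_leI[OF assms(2)])
  fix x
  assume x: "x \<in> \<Lambda>"
  have "knorm_at \<Lambda> \<kappa> (\<lambda>X S T. \<Phi> X S T + \<Psi> X S T) x \<le> knorm_at \<Lambda> \<kappa> \<Phi> x + knorm_at \<Lambda> \<kappa> \<Psi> x"
    unfolding knorm_at_def wnorm_def sum.distrib[symmetric] distrib_left[symmetric]
    by (intro sum_mono mult_left_mono opnorm_add finite_modes assms(1))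
      (simp add: kweight_pos less_imp_le)
  also have "\<dots> \<le> knorm \<Lambda> \<kappa> \<Phi> + knorm \<Lambda> \<kappa> \<Psi>"
    by (intro add_mono knorm_at_le_knorm assms(1) x)
  finally show "knorm_at \<Lambda> \<kappa> (\<lambda>X S T. \<Phi> X S T + \<Psi> X S T) x \<le> knorm \<Lambda> \<kappa> \<Phi> + knorm \<Lambda> \<kappa> \<Psi>" .
qed

lemma knorm_smult:
  assumes "finite \<Lambda>" "\<Lambda> \<noteq> {}"
  shows "knorm \<Lambda> \<kappa> (\<lambda>X S T. c * \<Phi> X S T) \<le> cmod c * knorm \<Lambda> \<kappa> \<Phi>"
proof (rule knorm_leI[OF assms(2)])
  fix x
  assume x: "x \<in> \<Lambda>"
  have "knorm_at \<Lambda> \<kappa> (\<lambda>X S T. c * \<Phi> X S T) x \<le> cmod c * knorm_at \<Lambda> \<kappa> \<Phi> x"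
    unfolding knorm_at_def wnorm_def sum_distrib_left mult.left_commute[of "cmod c"]
    by (intro sum_mono mult_left_mono opnorm_smult finite_modes assms(1))
      (simp add: kweight_pos less_imp_le)
  also have "\<dots> \<le> cmod c * knorm \<Lambda> \<kappa> \<Phi>"
    by (intro mult_left_mono knorm_at_le_knorm assms(1) x) simp
  finally show "knorm_at \<Lambda> \<kappa> (\<lambda>X S T. c * \<Phi> X S T) x \<le> cmod c * knorm \<Lambda> \<kappa> \<Phi>" .
qed

lemma knorm_zero:
  assumes "finite \<Lambda>" "\<Lambda> \<noteq> {}"
  shows "knorm \<Lambda> \<kappa> (\<lambda>X S T. 0) = 0"
proof -
  have "knorm \<Lambda> \<kappa> (\<lambda>X S T. 0) \<le> 0"
    by (rule knorm_leI[OF assms(2)])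
      (simp add: knorm_at_def wnorm_def opnorm_zero finite_modes assms(1))
  then show ?thesis
    using knorm_nonneg[OF assms] by (meson antisym)
qed

lemma knorm_sum:
  assumes "finite \<Lambda>" "\<Lambda> \<noteq> {}"
  shows "knorm \<Lambda> \<kappa> (\<lambda>X S T. \<Sum>n\<in>N. f n X S T) \<le> (\<Sum>n\<in>N. knorm \<Lambda> \<kappa> (f n))"
proof (induction N rule: infinite_finite_induct)
  case (insert n N)
  then show ?case
    using knorm_add[OF assms, of \<kappa> "f n" "\<lambda>X S T. \<Sum>n\<in>N. f n X S T"] by simp
qed (simp_all add: knorm_zero[OF assms])

lemma cmod_le_knorm:
  assumes "finite \<Lambda>" "0 \<le> \<kappa>" "X \<subseteq> \<Lambda>" "X \<noteq> {}" "S \<subseteq> modes \<Lambda>" "T \<subseteq> modes \<Lambda>"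
  shows "cmod (\<Phi> X S T) \<le> knorm \<Lambda> \<kappa> \<Phi>"
proof -
  obtain x where x: "x \<in> X"
    using assms(4) by blast
  have "cmod (\<Phi> X S T) \<le> opnorm (modes \<Lambda>) (\<Phi> X)"
    by (intro cmod_le_opnorm finite_modes assms)
  also have "\<dots> \<le> wnorm \<Lambda> \<kappa> \<Phi> X"
    using kweight_ge_1[OF assms(2), of X] opnorm_nonneg[OF finite_modes[OF assms(1)], of "\<Phi> X"]
    by (simp add: wnorm_def mult_le_cancel_right1)
  also have "\<dots> \<le> knorm_at \<Lambda> \<kappa> \<Phi> x"
    unfolding knorm_at_def using assms(1,3) x by (intro member_le_sum wnorm_nonneg) auto
  also have "\<dots> \<le> knorm \<Lambda> \<kappa> \<Phi>"
    using assms(3) x by (intro knorm_at_le_knorm assms(1)) auto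
  finally show ?thesis .
qed

lemma knorm_le_entry_l1:
  assumes "finite \<Lambda>" "\<Lambda> \<noteq> {}"
  shows "knorm \<Lambda> \<kappa> \<Phi> \<le> (\<Sum>X\<in>Pow \<Lambda> - {{}}. kweight \<kappa> X * entry_l1 (modes \<Lambda>) (\<Phi> X))"
proof (rule knorm_leI[OF assms(2)])
  fix x
  have "knorm_at \<Lambda> \<kappa> \<Phi> x \<le> (\<Sum>X | X \<subseteq> \<Lambda> \<and> x \<in> X. kweight \<kappa> X * entry_l1 (modes \<Lambda>) (\<Phi> X))"
    unfolding knorm_at_def wnorm_def
    by (intro sum_mono mult_left_mono opnorm_le_entry_l1 finite_modes assms(1))
      (simp add: kweight_pos less_imp_le)
  also have "\<dots> \<le> (\<Sum>X\<in>Pow \<Lambda> - {{}}. kweight \<kappa> X * entry_l1 (modes \<Lambda>) (\<Phi> X))"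
    using assms(1) by (intro sum_mono2) (auto simp: entry_l1_def kweight_pos less_imp_le sum_nonneg)
  finally show "knorm_at \<Lambda> \<kappa> \<Phi> x \<le> (\<Sum>X\<in>Pow \<Lambda> - {{}}. kweight \<kappa> X * entry_l1 (modes \<Lambda>) (\<Phi> X))" .
qed

text \<open>The \<open>\<kappa>\<close>-norm never looks at the entries with \<open>X = {}\<close>, so these need not converge.\<close>
lemma knorm_tendsto_zero:
  assumes "finite \<Lambda>" "\<Lambda> \<noteq> {}"
    and "\<And>X S T. X \<subseteq> \<Lambda> \<Longrightarrow> X \<noteq> {} \<Longrightarrow> S \<subseteq> modes \<Lambda> \<Longrightarrow> T \<subseteq> modes \<Lambda> \<Longrightarrow> (\<lambda>N. D N X S T) \<longlonglongrightarrow> 0"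
  shows "(\<lambda>N. knorm \<Lambda> \<kappa> (D N)) \<longlonglongrightarrow> 0"
proof (rule Lim_null_comparison)
  show "\<forall>\<^sub>F N in sequentially.
      norm (knorm \<Lambda> \<kappa> (D N)) \<le> (\<Sum>X\<in>Pow \<Lambda> - {{}}. kweight \<kappa> X * entry_l1 (modes \<Lambda>) (D N X))"
    using knorm_le_entry_l1[OF assms(1,2)] knorm_nonneg[OF assms(1,2)] by simp
  show "(\<lambda>N. \<Sum>X\<in>Pow \<Lambda> - {{}}. kweight \<kappa> X * entry_l1 (modes \<Lambda>) (D N X)) \<longlonglongrightarrow> 0"
    unfolding entry_l1_def
    by (intro tendsto_null_sum tendsto_mult_right_zero tendsto_norm_zero assms(3)) auto
qed

lemma knorm_le_limit:
  assumes fin: "finite \<Lambda>" and ne: "\<Lambda> \<noteq> {}"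
    and lim: "(\<lambda>N. knorm \<Lambda> \<kappa> (\<lambda>X S T. \<Psi> N X S T - \<Phi> X S T)) \<longlonglongrightarrow> 0"
    and bound: "\<And>N. knorm \<Lambda> \<kappa> (\<Psi> N) \<le> K"
  shows "knorm \<Lambda> \<kappa> \<Phi> \<le> K"
proof (rule LIMSEQ_le_const)
  show "(\<lambda>N. K + knorm \<Lambda> \<kappa> (\<lambda>X S T. \<Psi> N X S T - \<Phi> X S T)) \<longlonglongrightarrow> K"
    using tendsto_add[OF tendsto_const lim] by simp
  have "knorm \<Lambda> \<kappa> \<Phi> \<le> K + knorm \<Lambda> \<kappa> (\<lambda>X S T. \<Psi> N X S T - \<Phi> X S T)" for N
  proof -
    have "knorm \<Lambda> \<kappa> \<Phi> \<le> knorm \<Lambda> \<kappa> (\<Psi> N) + knorm \<Lambda> \<kappa> (\<lambda>X S T. (-1) * (\<Psi> N X S T - \<Phi> X S T))"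
      using knorm_add[OF fin ne, of \<kappa> "\<Psi> N" "\<lambda>X S T. (-1) * (\<Psi> N X S T - \<Phi> X S T)"] by simp
    then show ?thesis
      using bound[of N] knorm_smult[OF fin ne, of \<kappa> "-1" "\<lambda>X S T. \<Psi> N X S T - \<Phi> X S T"] by simp
  qed
  then show "\<exists>N0. \<forall>N\<ge>N0. knorm \<Lambda> \<kappa> \<Phi> \<le> K + knorm \<Lambda> \<kappa> (\<lambda>X S T. \<Psi> N X S T - \<Phi> X S T)"
    by blast
qed

lemma knorm_series:
  fixes f :: "nat \<Rightarrow> interaction"
  assumes fin: "finite \<Lambda>" and ne: "\<Lambda> \<noteq> {}" and \<kappa>: "0 \<le> \<kappa>"
    and summable: "summable (\<lambda>n. knorm \<Lambda> \<kappa> (f n))"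
  shows "(\<lambda>N. knorm \<Lambda> \<kappa> (\<lambda>X S T. (\<Sum>n<N. f n X S T) - (\<Sum>n. f n X S T))) \<longlonglongrightarrow> 0"
    and "knorm \<Lambda> \<kappa> (\<lambda>X S T. \<Sum>n. f n X S T) \<le> (\<Sum>n. knorm \<Lambda> \<kappa> (f n))"
proof -
  have "(\<lambda>n. f n X S T) sums (\<Sum>n. f n X S T)"
    if "X \<subseteq> \<Lambda>" "X \<noteq> {}" "S \<subseteq> modes \<Lambda>" "T \<subseteq> modes \<Lambda>" for X S T
    using that by (intro summable_sums summable_comparison_test'[OF summable] cmod_le_knorm fin \<kappa>)
  then show lim: "(\<lambda>N. knorm \<Lambda> \<kappa> (\<lambda>X S T. (\<Sum>n<N. f n X S T) - (\<Sum>n. f n X S T))) \<longlonglongrightarrow> 0"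
    by (intro knorm_tendsto_zero fin ne LIM_zero) (simp add: sums_def)
  have "knorm \<Lambda> \<kappa> (\<lambda>X S T. \<Sum>n<N. f n X S T) \<le> (\<Sum>n. knorm \<Lambda> \<kappa> (f n))" for N
    using knorm_sum[OF fin ne, of \<kappa> f "{..<N}"] sum_le_suminf[OF summable, of "{..<N}"]
      knorm_nonneg[OF fin ne]
    by fastforce
  then show "knorm \<Lambda> \<kappa> (\<lambda>X S T. \<Sum>n. f n X S T) \<le> (\<Sum>n. knorm \<Lambda> \<kappa> (f n))"
    by (rule knorm_le_limit[OF fin ne lim])
qed

section \<open>Commutators of interactions\<close>

lemma interaction_alg: "is_interaction \<Lambda> \<Phi> \<Longrightarrow> X \<subseteq> \<Lambda> \<Longrightarrow> \<Phi> X \<in> alg (modes \<Lambda>) (modes X)"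
  by (simp add: is_interaction_def loc_even_def)

lemma interaction_even: "is_interaction \<Lambda> \<Phi> \<Longrightarrow> X \<subseteq> \<Lambda> \<Longrightarrow> parity_conj (modes \<Lambda>) (\<Phi> X) = \<Phi> X"
  by (simp add: is_interaction_def loc_even_def even_op_iff_parity_conj)

lemma comm_interactions_disjoint:
  assumes "finite \<Lambda>" "is_interaction \<Lambda> A" "is_interaction \<Lambda> B" "X \<subseteq> \<Lambda>" "Y \<subseteq> \<Lambda>" "X \<inter> Y = {}"
  shows "comm (modes \<Lambda>) (A X) (B Y) = (\<lambda>S T. 0)"
  using even_opmult_commute[of "modes \<Lambda>" "modes X" "modes Y" "B Y" "A X"] assms
  by (simp add: comm_def finite_modes modes_disjoint interaction_alg interaction_even)

definition covering_pairs :: "site set \<Rightarrow> site set \<Rightarrow> (site set \<times> site set) set" where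
  "covering_pairs \<Lambda> Z = {(X, Y). X \<subseteq> \<Lambda> \<and> Y \<subseteq> \<Lambda> \<and> X \<union> Y = Z}"

lemma finite_covering_pairs: "finite \<Lambda> \<Longrightarrow> finite (covering_pairs \<Lambda> Z)"
  by (rule finite_subset[of _ "Pow \<Lambda> \<times> Pow \<Lambda>"]) (auto simp: covering_pairs_def)

lemma ad_eq:
  "ad \<Lambda> A B Z = (\<lambda>S T. \<Sum>p\<in>covering_pairs \<Lambda> Z. comm (modes \<Lambda>) (A (fst p)) (B (snd p)) S T)"
  unfolding ad_def covering_pairs_def by (intro ext sum.cong) auto

lemma is_interaction_ad:
  assumes fin: "finite \<Lambda>" and A: "is_interaction \<Lambda> A" and B: "is_interaction \<Lambda> B"
  shows "is_interaction \<Lambda> (ad \<Lambda> A B)"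
  unfolding is_interaction_def
proof (intro allI conjI impI)
  fix Z
  assume "\<not> Z \<subseteq> \<Lambda>"
  then have "covering_pairs \<Lambda> Z = {}"
    by (auto simp: covering_pairs_def)
  then show "ad \<Lambda> A B Z = (\<lambda>S T. 0)"
    by (simp add: ad_eq)
next
  fix Z
  assume Z: "Z \<subseteq> \<Lambda>"
  let ?M = "modes \<Lambda>"
  have "ad \<Lambda> A B Z \<in> alg ?M (modes Z)"
    unfolding ad_eq
  proof (rule alg_sum[OF finite_covering_pairs[OF fin]])
    fix p
    assume "p \<in> covering_pairs \<Lambda> Z"
    then have "fst p \<subseteq> \<Lambda>" "snd p \<subseteq> \<Lambda>" "fst p \<subseteq> Z" "snd p \<subseteq> Z"
      by (auto simp: covering_pairs_def)
    then show "comm ?M (A (fst p)) (B (snd p)) \<in> alg ?M (modes Z)"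
      by (intro alg_comm alg_mono[OF interaction_alg[OF A]] alg_mono[OF interaction_alg[OF B]]
          modes_mono)
  qed
  moreover have "parity_conj ?M (ad \<Lambda> A B Z) = ad \<Lambda> A B Z"
    unfolding ad_eq parity_conj_sum[OF finite_modes[OF fin]]
    by (intro ext sum.cong refl)
      (auto simp: covering_pairs_def parity_conj_comm[OF finite_modes[OF fin]]
        interaction_even[OF A] interaction_even[OF B])
  ultimately show "ad \<Lambda> A B Z \<in> loc_even \<Lambda> Z"
    by (simp add: loc_even_def even_op_iff_parity_conj)
qed

lemma comm_zero_left: "comm M (\<lambda>S T. 0) B = (\<lambda>S T. 0)"
  by (simp add: comm_def opmult_def fun_eq_iff)

lemma comm_zero_right: "comm M A (\<lambda>S T. 0) = (\<lambda>S T. 0)"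
  by (simp add: comm_def opmult_def fun_eq_iff)

definition size_bound :: "site set \<Rightarrow> interaction \<Rightarrow> nat \<Rightarrow> bool" where
  "size_bound \<Lambda> \<Phi> s \<longleftrightarrow> (\<forall>X. X \<subseteq> \<Lambda> \<longrightarrow> \<Phi> X \<noteq> (\<lambda>S T. 0) \<longrightarrow> card X \<le> s)"

lemma size_bound_ssize:
  assumes "finite \<Lambda>"
  shows "size_bound \<Lambda> \<Phi> (ssize \<Lambda> \<Phi>)"
proof -
  have "finite {card X |X. X \<subseteq> \<Lambda> \<and> \<Phi> X \<noteq> (\<lambda>S T. 0)}"
    by (rule finite_subset[of _ "card ` Pow \<Lambda>"]) (auto simp: assms)
  then show ?thesis
    unfolding size_bound_def ssize_def by (blast intro: le_cSup_finite)
qed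

lemma size_bound_ad:
  assumes "size_bound \<Lambda> A sA" "size_bound \<Lambda> B sB"
  shows "size_bound \<Lambda> (ad \<Lambda> A B) (sA + sB)"
  unfolding size_bound_def
proof (intro allI impI)
  fix Z
  assume "Z \<subseteq> \<Lambda>" and nonzero: "ad \<Lambda> A B Z \<noteq> (\<lambda>S T. 0)"
  have "\<exists>p\<in>covering_pairs \<Lambda> Z. comm (modes \<Lambda>) (A (fst p)) (B (snd p)) \<noteq> (\<lambda>S T. 0)"
    using nonzero unfolding ad_eq by (rule contrapos_np) simp
  then obtain X Y where "(X, Y) \<in> covering_pairs \<Lambda> Z"
    and comm_nonzero: "comm (modes \<Lambda>) (A X) (B Y) \<noteq> (\<lambda>S T. 0)"
    by auto
  then have XY: "X \<subseteq> \<Lambda>" "Y \<subseteq> \<Lambda>" "Z = X \<union> Y"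
    by (auto simp: covering_pairs_def)
  have "A X \<noteq> (\<lambda>S T. 0)"
    using comm_nonzero comm_zero_left[of "modes \<Lambda>" "B Y"] by auto
  then have "card X \<le> sA"
    using assms(1) XY(1) by (simp add: size_bound_def)
  moreover have "B Y \<noteq> (\<lambda>S T. 0)"
    using comm_nonzero comm_zero_right[of "modes \<Lambda>" "A X"] by auto
  then have "card Y \<le> sB"
    using assms(2) XY(2) by (simp add: size_bound_def)
  ultimately show "card Z \<le> sA + sB"
    using card_Un_le[of X Y] unfolding XY(3) by linarith
qed

lemma size_bound_0_ad:
  assumes "finite \<Lambda>" "is_interaction \<Lambda> A" "is_interaction \<Lambda> B" "size_bound \<Lambda> A 0"
  shows "ad \<Lambda> A B = (\<lambda>Z S T. 0)"
proof -
  have "comm (modes \<Lambda>) (A X) (B Y) = (\<lambda>S T. 0)" if "X \<subseteq> \<Lambda>" "Y \<subseteq> \<Lambda>" for X Y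
  proof (cases "X = {}")
    case True
    then show ?thesis
      using comm_interactions_disjoint[OF assms(1-3) that] by simp
  next
    case False
    moreover have "finite X"
      using assms(1) that(1) finite_subset by blast
    ultimately have "A X = (\<lambda>S T. 0)"
      using assms(4) that(1) by (auto simp: size_bound_def)
    then show ?thesis
      by (simp add: comm_zero_left)
  qed
  then show ?thesis
    by (auto simp: ad_eq covering_pairs_def fun_eq_iff intro!: sum.neutral)
qed

lemma wnorm_ad_le:
  assumes fin: "finite \<Lambda>" and \<kappa>: "0 \<le> \<kappa>"
    and A: "is_interaction \<Lambda> A" and B: "is_interaction \<Lambda> B" and Z: "Z \<subseteq> \<Lambda>"
  shows "wnorm \<Lambda> \<kappa> (ad \<Lambda> A B) Z \<le> (\<Sum>p | p \<in> covering_pairs \<Lambda> Z \<and> fst p \<inter> snd p \<noteq> {}.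
      2 * wnorm \<Lambda> \<kappa> A (fst p) * wnorm \<Lambda> \<kappa> B (snd p))"
proof -
  let ?M = "modes \<Lambda>"
  let ?P = "covering_pairs \<Lambda> Z"
  let ?Q = "{p. p \<in> ?P \<and> fst p \<inter> snd p \<noteq> {}}"
  have finM: "finite ?M"
    using fin by (rule finite_modes)
  have "opnorm ?M (ad \<Lambda> A B Z) \<le> (\<Sum>p\<in>?P. opnorm ?M (comm ?M (A (fst p)) (B (snd p))))"
    unfolding ad_eq by (rule opnorm_sum[OF finM])
  also have "\<dots> = (\<Sum>p\<in>?Q. opnorm ?M (comm ?M (A (fst p)) (B (snd p))))"
    using finite_covering_pairs[OF fin]
    by (intro sum.mono_neutral_right)
      (auto simp: covering_pairs_def comm_interactions_disjoint[OF fin A B] opnorm_zero[OF finM])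
  finally have "wnorm \<Lambda> \<kappa> (ad \<Lambda> A B) Z
      \<le> (\<Sum>p\<in>?Q. kweight \<kappa> Z * opnorm ?M (comm ?M (A (fst p)) (B (snd p))))"
    unfolding wnorm_def sum_distrib_left[symmetric]
    by (rule mult_left_mono) (simp add: kweight_pos less_imp_le)
  also have "\<dots> \<le> (\<Sum>p\<in>?Q. 2 * wnorm \<Lambda> \<kappa> A (fst p) * wnorm \<Lambda> \<kappa> B (snd p))"
  proof (rule sum_mono)
    fix p
    assume "p \<in> ?Q"
    then have "Z = fst p \<union> snd p"
      by (auto simp: covering_pairs_def)
    then have "kweight \<kappa> Z \<le> kweight \<kappa> (fst p) * kweight \<kappa> (snd p)"
      using kweight_Un_le[OF \<kappa>] by simp
    then have "kweight \<kappa> Z * opnorm ?M (comm ?M (A (fst p)) (B (snd p)))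
        \<le> (kweight \<kappa> (fst p) * kweight \<kappa> (snd p)) *
          (2 * opnorm ?M (A (fst p)) * opnorm ?M (B (snd p)))"
      by (intro mult_mono opnorm_comm opnorm_nonneg finM) (simp_all add: kweight_pos less_imp_le)
    then show "kweight \<kappa> Z * opnorm ?M (comm ?M (A (fst p)) (B (snd p)))
        \<le> 2 * wnorm \<Lambda> \<kappa> A (fst p) * wnorm \<Lambda> \<kappa> B (snd p)"
      by (simp add: wnorm_def ac_simps)
  qed
  finally show ?thesis .
qed

lemma sum_wnorm_overlapping_le:
  assumes fin: "finite \<Lambda>" and X: "X \<subseteq> \<Lambda>"
  shows "(\<Sum>Y | Y \<subseteq> \<Lambda> \<and> X \<inter> Y \<noteq> {}. wnorm \<Lambda> \<kappa> \<Psi> Y) \<le> card X * knorm \<Lambda> \<kappa> \<Psi>"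
proof -
  let ?O = "{Y. Y \<subseteq> \<Lambda> \<and> X \<inter> Y \<noteq> {}}"
  have finX: "finite X"
    using fin X by (rule finite_subset[rotated])
  have finO: "finite ?O"
    using fin by simp
  have "(\<Sum>Y\<in>?O. wnorm \<Lambda> \<kappa> \<Psi> Y) \<le> (\<Sum>Y\<in>?O. \<Sum>y | y \<in> X \<and> y \<in> Y. wnorm \<Lambda> \<kappa> \<Psi> Y)"
  proof (rule sum_mono)
    fix Y
    assume "Y \<in> ?O"
    then have "1 \<le> real (card {y. y \<in> X \<and> y \<in> Y})"
      using finX by (auto simp: Suc_le_eq card_gt_0_iff)
    then have "1 * wnorm \<Lambda> \<kappa> \<Psi> Y \<le> real (card {y. y \<in> X \<and> y \<in> Y}) * wnorm \<Lambda> \<kappa> \<Psi> Y"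
      by (rule mult_right_mono) (rule wnorm_nonneg[OF fin])
    then show "wnorm \<Lambda> \<kappa> \<Psi> Y \<le> (\<Sum>y | y \<in> X \<and> y \<in> Y. wnorm \<Lambda> \<kappa> \<Psi> Y)"
      by simp
  qed
  also have "\<dots> = (\<Sum>y\<in>X. \<Sum>Y | Y \<in> ?O \<and> y \<in> Y. wnorm \<Lambda> \<kappa> \<Psi> Y)"
    using sum.swap_restrict[OF finO finX, of "\<lambda>Y y. wnorm \<Lambda> \<kappa> \<Psi> Y" "\<lambda>Y y. y \<in> Y"] by simp
  also have "\<dots> \<le> (\<Sum>y\<in>X. knorm_at \<Lambda> \<kappa> \<Psi> y)"
    unfolding knorm_at_def using fin
    by (intro sum_mono sum_mono2) (auto simp: wnorm_nonneg)
  also have "\<dots> \<le> (\<Sum>y\<in>X. knorm \<Lambda> \<kappa> \<Psi>)"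
    using X by (intro sum_mono knorm_at_le_knorm fin) auto
  finally show ?thesis
    by simp
qed

lemma sum_wnorm_overlapping_pairs_le:
  assumes fin: "finite \<Lambda>" and x: "x \<in> \<Lambda>" and s: "size_bound \<Lambda> \<Phi> s"
  shows "(\<Sum>X | X \<subseteq> \<Lambda> \<and> x \<in> X. \<Sum>Y | Y \<subseteq> \<Lambda> \<and> X \<inter> Y \<noteq> {}. wnorm \<Lambda> \<kappa> \<Phi> X * wnorm \<Lambda> \<kappa> \<Psi> Y)
    \<le> s * knorm \<Lambda> \<kappa> \<Phi> * knorm \<Lambda> \<kappa> \<Psi>"
proof -
  have ne: "\<Lambda> \<noteq> {}"
    using x by blast
  have "(\<Sum>Y | Y \<subseteq> \<Lambda> \<and> X \<inter> Y \<noteq> {}. wnorm \<Lambda> \<kappa> \<Phi> X * wnorm \<Lambda> \<kappa> \<Psi> Y)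
      \<le> s * knorm \<Lambda> \<kappa> \<Psi> * wnorm \<Lambda> \<kappa> \<Phi> X" if X: "X \<subseteq> \<Lambda>" for X
  proof (cases "\<Phi> X = (\<lambda>S T. 0)")
    case True
    then show ?thesis
      by (simp add: wnorm_def opnorm_zero finite_modes fin)
  next
    case False
    then have "card X \<le> s"
      using s X by (simp add: size_bound_def)
    then have "card X * knorm \<Lambda> \<kappa> \<Psi> \<le> s * knorm \<Lambda> \<kappa> \<Psi>"
      by (intro mult_right_mono knorm_nonneg fin ne) simp
    then show ?thesis
      using sum_wnorm_overlapping_le[OF fin X, of \<kappa> \<Psi>] wnorm_nonneg[OF fin, of \<kappa> \<Phi> X]
      by (simp add: sum_distrib_left[symmetric] mult.commute mult_left_mono order_trans)
  qed
  then have "(\<Sum>X | X \<subseteq> \<Lambda> \<and> x \<in> X. \<Sum>Y | Y \<subseteq> \<Lambda> \<and> X \<inter> Y \<noteq> {}. wnorm \<Lambda> \<kappa> \<Phi> X * wnorm \<Lambda> \<kappa> \<Psi> Y)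
      \<le> s * knorm \<Lambda> \<kappa> \<Psi> * knorm_at \<Lambda> \<kappa> \<Phi> x"
    unfolding knorm_at_def sum_distrib_left by (intro sum_mono) auto
  also have "\<dots> \<le> s * knorm \<Lambda> \<kappa> \<Psi> * knorm \<Lambda> \<kappa> \<Phi>"
    by (intro mult_left_mono knorm_at_le_knorm fin x) (simp add: knorm_nonneg fin ne)
  finally show ?thesis
    by (simp add: ac_simps)
qed

lemma knorm_at_ad_le:
  assumes fin: "finite \<Lambda>" and \<kappa>: "0 \<le> \<kappa>" and A: "is_interaction \<Lambda> A" and B: "is_interaction \<Lambda> B"
  shows "knorm_at \<Lambda> \<kappa> (ad \<Lambda> A B) x \<le>
    (\<Sum>p | fst p \<subseteq> \<Lambda> \<and> snd p \<subseteq> \<Lambda> \<and> fst p \<inter> snd p \<noteq> {} \<and> x \<in> fst p \<union> snd p.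
      2 * wnorm \<Lambda> \<kappa> A (fst p) * wnorm \<Lambda> \<kappa> B (snd p))"
proof -
  let ?h = "\<lambda>p. 2 * wnorm \<Lambda> \<kappa> A (fst p) * wnorm \<Lambda> \<kappa> B (snd p)"
  define P where "P = {p. fst p \<subseteq> \<Lambda> \<and> snd p \<subseteq> \<Lambda> \<and> fst p \<inter> snd p \<noteq> {} \<and> x \<in> fst p \<union> snd p}"
  have "{p. p \<in> covering_pairs \<Lambda> Z \<and> fst p \<inter> snd p \<noteq> {}} = {p \<in> P. fst p \<union> snd p = Z}"
    if "Z \<subseteq> \<Lambda> \<and> x \<in> Z" for Z
    using that by (auto simp: covering_pairs_def P_def)
  moreover have "finite P"
    by (rule finite_subset[of _ "Pow \<Lambda> \<times> Pow \<Lambda>"]) (auto simp: P_def fin)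
  ultimately have "(\<Sum>Z | Z \<subseteq> \<Lambda> \<and> x \<in> Z. \<Sum>p | p \<in> covering_pairs \<Lambda> Z \<and> fst p \<inter> snd p \<noteq> {}. ?h p)
      = (\<Sum>p\<in>P. ?h p)"
    using sum.group[of P "{Z. Z \<subseteq> \<Lambda> \<and> x \<in> Z}" "\<lambda>p. fst p \<union> snd p" ?h] fin
    by (auto simp: P_def intro!: sum.cong)
  moreover have "knorm_at \<Lambda> \<kappa> (ad \<Lambda> A B) x
      \<le> (\<Sum>Z | Z \<subseteq> \<Lambda> \<and> x \<in> Z. \<Sum>p | p \<in> covering_pairs \<Lambda> Z \<and> fst p \<inter> snd p \<noteq> {}. ?h p)"
    unfolding knorm_at_def by (intro sum_mono wnorm_ad_le fin \<kappa> A B) simp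
  ultimately show ?thesis
    by (simp add: P_def)
qed

lemma knorm_ad_le:
  assumes fin: "finite \<Lambda>" and ne: "\<Lambda> \<noteq> {}" and \<kappa>: "0 \<le> \<kappa>"
    and A: "is_interaction \<Lambda> A" and B: "is_interaction \<Lambda> B"
    and sA: "size_bound \<Lambda> A sA" and sB: "size_bound \<Lambda> B sB"
  shows "knorm \<Lambda> \<kappa> (ad \<Lambda> A B) \<le> 2 * real (sA + sB) * knorm \<Lambda> \<kappa> A * knorm \<Lambda> \<kappa> B"
proof (rule knorm_leI[OF ne])
  fix x
  assume x: "x \<in> \<Lambda>"
  define h where "h = (\<lambda>(X, Y). 2 * wnorm \<Lambda> \<kappa> A X * wnorm \<Lambda> \<kappa> B Y)"
  define overlap where "overlap = (\<lambda>X. {Y. Y \<subseteq> \<Lambda> \<and> X \<inter> Y \<noteq> {}})"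
  define P1 where "P1 = Sigma {X. X \<subseteq> \<Lambda> \<and> x \<in> X} overlap"
  define P2 where "P2 = prod.swap ` Sigma {Y. Y \<subseteq> \<Lambda> \<and> x \<in> Y} overlap"
  have h: "0 \<le> h p" for p
    by (simp add: h_def wnorm_nonneg fin split: prod.split)
  have fin_Sigma: "finite (Sigma {X. X \<subseteq> \<Lambda> \<and> x \<in> X} overlap)"
    using fin by (intro finite_SigmaI) (auto simp: overlap_def)
  have "knorm_at \<Lambda> \<kappa> (ad \<Lambda> A B) x
      \<le> (\<Sum>p | fst p \<subseteq> \<Lambda> \<and> snd p \<subseteq> \<Lambda> \<and> fst p \<inter> snd p \<noteq> {} \<and> x \<in> fst p \<union> snd p. h p)"
    using knorm_at_ad_le[OF fin \<kappa> A B, of x] by (simp add: h_def case_prod_beta)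
  also have "\<dots> \<le> (\<Sum>p\<in>P1 \<union> P2. h p)"
    using fin_Sigma h by (intro sum_mono2) (auto simp: P1_def P2_def overlap_def)
  also have "\<dots> \<le> (\<Sum>p\<in>P1. h p) + (\<Sum>p\<in>P2. h p)"
    using fin_Sigma h by (simp add: sum_Un P1_def P2_def sum_nonneg)
  also have "(\<Sum>p\<in>P1. h p) =
      2 * (\<Sum>X | X \<subseteq> \<Lambda> \<and> x \<in> X. \<Sum>Y | Y \<subseteq> \<Lambda> \<and> X \<inter> Y \<noteq> {}. wnorm \<Lambda> \<kappa> A X * wnorm \<Lambda> \<kappa> B Y)"
    using fin
    by (simp add: P1_def h_def overlap_def sum.Sigma[symmetric] sum_distrib_left mult.assoc)
  also have "(\<Sum>p\<in>P2. h p) =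
      2 * (\<Sum>Y | Y \<subseteq> \<Lambda> \<and> x \<in> Y. \<Sum>X | X \<subseteq> \<Lambda> \<and> Y \<inter> X \<noteq> {}. wnorm \<Lambda> \<kappa> B Y * wnorm \<Lambda> \<kappa> A X)"
    using fin
    by (simp add: P2_def h_def overlap_def sum.reindex sum.Sigma[symmetric] sum_distrib_left
        Int_commute ac_simps)
  also have "2 * (\<Sum>X | X \<subseteq> \<Lambda> \<and> x \<in> X. \<Sum>Y | Y \<subseteq> \<Lambda> \<and> X \<inter> Y \<noteq> {}. wnorm \<Lambda> \<kappa> A X * wnorm \<Lambda> \<kappa> B Y)
      + 2 * (\<Sum>Y | Y \<subseteq> \<Lambda> \<and> x \<in> Y. \<Sum>X | X \<subseteq> \<Lambda> \<and> Y \<inter> X \<noteq> {}. wnorm \<Lambda> \<kappa> B Y * wnorm \<Lambda> \<kappa> A X)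
      \<le> 2 * (sA * knorm \<Lambda> \<kappa> A * knorm \<Lambda> \<kappa> B) + 2 * (sB * knorm \<Lambda> \<kappa> B * knorm \<Lambda> \<kappa> A)"
    by (intro add_mono mult_left_mono sum_wnorm_overlapping_pairs_le fin x sA sB) simp_all
  finally show "knorm_at \<Lambda> \<kappa> (ad \<Lambda> A B) x \<le> 2 * real (sA + sB) * knorm \<Lambda> \<kappa> A * knorm \<Lambda> \<kappa> B"
    by (simp add: algebra_simps)
qed

section \<open>The commutator series\<close>

lemma negative_binomial_sums:
  fixes r :: real
  assumes "\<bar>r\<bar> < 1"
  shows "(\<lambda>n. real ((n + s) choose n) * r ^ n) sums (1 / (1 - r) ^ Suc s)"
proof -
  have "(\<lambda>n. (- real (Suc s) gchoose n) * (- r) ^ n) sums ((1 + - r) powr (- real (Suc s)))"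
    using assms by (intro gen_binomial_real) simp
  moreover have "(- real (Suc s) gchoose n) * (- r) ^ n = real ((n + s) choose n) * r ^ n" for n
  proof -
    have "(- real (Suc s) gchoose n) = (-1) ^ n * real ((n + s) choose n)"
      using gbinomial_minus[of "real (Suc s)" n] by (simp add: binomial_gbinomial add.commute)
    moreover have "(-1) ^ n * (- r) ^ n = r ^ n"
      by (simp flip: power_mult_distrib)
    ultimately show ?thesis
      by (metis mult.assoc mult.commute)
  qed
  moreover have "(1 + - r) powr (- real (Suc s)) = 1 / (1 - r) ^ Suc s"
    using assms by (simp add: powr_minus powr_realpow divide_inverse del: of_nat_Suc)
  ultimately show ?thesis
    by simp
qed

lemma binomial_Suc_le: "(Suc n + s) choose Suc n \<le> Suc s * ((n + s) choose n)"
proof -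
  have "Suc n * ((Suc n + s) choose Suc n) = (Suc n + s) * ((n + s) choose n)"
    using binomial_absorption[of n "Suc n + s"] by simp
  also have "\<dots> \<le> Suc n * (Suc s * ((n + s) choose n))"
    unfolding mult.assoc[symmetric] by (intro mult_right_mono) simp_all
  finally show ?thesis
    by (simp only: Suc_mult_le_cancel1)
qed

lemma is_interaction_ad_power:
  "finite \<Lambda> \<Longrightarrow> is_interaction \<Lambda> A \<Longrightarrow> is_interaction \<Lambda> B \<Longrightarrow> is_interaction \<Lambda> ((ad \<Lambda> A ^^ n) B)"
  by (induction n) (simp_all add: is_interaction_ad)

lemma size_bound_ad_power:
  "size_bound \<Lambda> A sA \<Longrightarrow> size_bound \<Lambda> B sB \<Longrightarrow> size_bound \<Lambda> ((ad \<Lambda> A ^^ n) B) (sB + n * sA)"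
  by (induction n) (simp_all add: add.left_commute size_bound_ad)

lemma knorm_ad_power_le:
  assumes fin: "finite \<Lambda>" and ne: "\<Lambda> \<noteq> {}" and \<kappa>: "0 \<le> \<kappa>"
    and A: "is_interaction \<Lambda> A" and B: "is_interaction \<Lambda> B"
    and sA: "size_bound \<Lambda> A sA" and sB: "size_bound \<Lambda> B sB"
  shows "knorm \<Lambda> \<kappa> ((ad \<Lambda> A ^^ n) B)
    \<le> fact (n + sB) / fact sB * (2 * real sA * knorm \<Lambda> \<kappa> A) ^ n * knorm \<Lambda> \<kappa> B"
proof (induction n)
  case 0
  then show ?case
    by simp
next
  case (Suc n)
  let ?x = "2 * real sA * knorm \<Lambda> \<kappa> A"
  let ?B = "(ad \<Lambda> A ^^ n) B"
  have x: "0 \<le> ?x"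
    by (simp add: knorm_nonneg fin ne)
  show ?case
  proof (cases "sA = 0")
    case True
    \<comment> \<open>here \<open>knorm_ad_le\<close> is too weak, but \<open>A\<close> lives on \<open>{}\<close> and commutes with everything\<close>
    then have "(ad \<Lambda> A ^^ Suc n) B = (\<lambda>Z S T. 0)"
      using sA by (simp add: size_bound_0_ad fin A is_interaction_ad_power B)
    then show ?thesis
      using x by (simp add: knorm_zero fin ne knorm_nonneg)
  next
    case False
    have "knorm \<Lambda> \<kappa> (ad \<Lambda> A ?B) \<le> 2 * real (sA + (sB + n * sA)) * knorm \<Lambda> \<kappa> A * knorm \<Lambda> \<kappa> ?B"
      by (intro knorm_ad_le fin ne \<kappa> A is_interaction_ad_power B sA size_bound_ad_power sB)
    also have "\<dots> \<le> (?x * real (Suc n + sB)) * (fact (n + sB) / fact sB * ?x ^ n * knorm \<Lambda> \<kappa> B)"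
    proof (rule mult_mono[OF _ Suc])
      have "sB \<le> sA * sB"
        using False by simp
      then have "real (sA + (sB + n * sA)) \<le> real sA * real (Suc n + sB)"
        unfolding of_nat_mult[symmetric] of_nat_le_iff by (simp add: algebra_simps)
      then have "2 * real (sA + (sB + n * sA)) * knorm \<Lambda> \<kappa> A
          \<le> 2 * (real sA * real (Suc n + sB)) * knorm \<Lambda> \<kappa> A"
        by (intro mult_right_mono mult_left_mono) (simp_all add: knorm_nonneg fin ne)
      then show "2 * real (sA + (sB + n * sA)) * knorm \<Lambda> \<kappa> A \<le> ?x * real (Suc n + sB)"
        by (simp only: mult_ac)
    qed (use x in \<open>simp_all add: knorm_nonneg fin ne\<close>)
    also have "\<dots> = fact (Suc n + sB) / fact sB * ?x ^ Suc n * knorm \<Lambda> \<kappa> B"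
      by (simp only: add_Suc fact_Suc of_nat_mult) (simp add: field_simps)
    finally show ?thesis
      by simp
  qed
qed

lemma knorm_ad_power_Suc_div_fact_le:
  assumes fin: "finite \<Lambda>" and ne: "\<Lambda> \<noteq> {}" and \<kappa>: "0 \<le> \<kappa>"
    and A: "is_interaction \<Lambda> A" and B: "is_interaction \<Lambda> B"
    and sA: "size_bound \<Lambda> A sA" and sB: "size_bound \<Lambda> B sB"
    and small: "2 * real sA * knorm \<Lambda> \<kappa> A \<le> \<rho>"
  shows "knorm \<Lambda> \<kappa> ((ad \<Lambda> A ^^ Suc n) B) / fact (Suc n)
    \<le> 2 * real sA * knorm \<Lambda> \<kappa> A * (1 + real sB) * knorm \<Lambda> \<kappa> B * (real ((n + sB) choose n) * \<rho> ^ n)"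
proof -
  let ?x = "2 * real sA * knorm \<Lambda> \<kappa> A"
  let ?b = "knorm \<Lambda> \<kappa> B"
  have x: "0 \<le> ?x" and b: "0 \<le> ?b"
    by (simp_all add: knorm_nonneg fin ne)
  have "knorm \<Lambda> \<kappa> ((ad \<Lambda> A ^^ Suc n) B) / fact (Suc n)
      \<le> fact (Suc n + sB) / fact sB * ?x ^ Suc n * ?b / fact (Suc n)"
    by (intro divide_right_mono knorm_ad_power_le fin ne \<kappa> A B sA sB) simp
  also have "\<dots> = real ((Suc n + sB) choose Suc n) * (?x * ?x ^ n) * ?b"
    using binomial_fact[of "Suc n" "Suc n + sB", where 'a = real]
    by (simp del: binomial_Suc_Suc fact_Suc add: field_simps)
  also have "\<dots> \<le> ((1 + real sB) * real ((n + sB) choose n)) * (?x * \<rho> ^ n) * ?b"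
  proof (rule mult_right_mono[OF mult_mono b])
    show "real ((Suc n + sB) choose Suc n) \<le> (1 + real sB) * real ((n + sB) choose n)"
      using binomial_Suc_le[of n sB] unfolding of_nat_le_iff[symmetric, where 'a = real]
      by (simp del: binomial_Suc_Suc add: distrib_right)
    show "?x * ?x ^ n \<le> ?x * \<rho> ^ n"
      using power_mono[OF small x, of n] x by (rule mult_left_mono)
  qed (use x in simp_all)
  also have "\<dots> = ?x * (1 + real sB) * ?b * (real ((n + sB) choose n) * \<rho> ^ n)"
    by (simp add: ac_simps)
  finally show ?thesis .
qed

text \<open>The constant comes from \<open>knorm_ad_power_Suc_div_fact_le\<close> and the negative binomial series.\<close>
definition bch_constant :: "nat \<Rightarrow> nat \<Rightarrow> real \<Rightarrow> real" where
  "bch_constant sA sB \<rho> = 2 * real sA * (1 + real sB) / (1 - \<rho>) ^ Suc sB"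

lemma bch_terms_summable_le:
  assumes fin: "finite \<Lambda>" and ne: "\<Lambda> \<noteq> {}" and \<kappa>: "0 \<le> \<kappa>"
    and A: "is_interaction \<Lambda> A" and B: "is_interaction \<Lambda> B"
    and sA: "size_bound \<Lambda> A sA" and sB: "size_bound \<Lambda> B sB"
    and small: "2 * real sA * knorm \<Lambda> \<kappa> A \<le> \<rho>" and \<rho>: "\<rho> < 1"
  shows "summable (\<lambda>n. knorm \<Lambda> \<kappa> ((ad \<Lambda> A ^^ Suc n) B) / fact (Suc n))"
    and "(\<Sum>n. knorm \<Lambda> \<kappa> ((ad \<Lambda> A ^^ Suc n) B) / fact (Suc n))
      \<le> bch_constant sA sB \<rho> * knorm \<Lambda> \<kappa> A * knorm \<Lambda> \<kappa> B"
proof -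
  let ?t = "\<lambda>n. knorm \<Lambda> \<kappa> ((ad \<Lambda> A ^^ Suc n) B) / fact (Suc n)"
  let ?c = "2 * real sA * knorm \<Lambda> \<kappa> A * (1 + real sB) * knorm \<Lambda> \<kappa> B"
  have "0 \<le> 2 * real sA * knorm \<Lambda> \<kappa> A"
    by (simp add: knorm_nonneg fin ne)
  with small \<rho> have g:
    "(\<lambda>n. ?c * (real ((n + sB) choose n) * \<rho> ^ n)) sums (?c * (1 / (1 - \<rho>) ^ Suc sB))"
    by (intro sums_mult negative_binomial_sums) simp
  have t_le: "?t n \<le> ?c * (real ((n + sB) choose n) * \<rho> ^ n)" for n
    by (rule knorm_ad_power_Suc_div_fact_le[OF fin ne \<kappa> A B sA sB small])
  show summable: "summable ?t"
    using t_le by (intro summable_comparison_test'[OF sums_summable[OF g]])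
      (simp add: knorm_nonneg fin ne)
  have "(\<Sum>n. ?t n) \<le> ?c * (1 / (1 - \<rho>) ^ Suc sB)"
    using suminf_le[OF t_le summable sums_summable[OF g]]
    by (simp add: sums_unique[OF g, symmetric])
  also have "\<dots> = bch_constant sA sB \<rho> * knorm \<Lambda> \<kappa> A * knorm \<Lambda> \<kappa> B"
    by (simp add: bch_constant_def divide_inverse mult_ac)
  finally show "(\<Sum>n. ?t n) \<le> bch_constant sA sB \<rho> * knorm \<Lambda> \<kappa> A * knorm \<Lambda> \<kappa> B" .
qed

lemma knorm_bch:
  assumes fin: "finite \<Lambda>" and ne: "\<Lambda> \<noteq> {}" and \<kappa>: "0 \<le> \<kappa>"
    and A: "is_interaction \<Lambda> A" and B: "is_interaction \<Lambda> B"
    and sA: "size_bound \<Lambda> A sA" and sB: "size_bound \<Lambda> B sB"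
    and small: "2 * real sA * knorm \<Lambda> \<kappa> A \<le> \<rho>" and \<rho>: "\<rho> < 1"
  shows "(\<lambda>N. knorm \<Lambda> \<kappa> (\<lambda>X S T. bch_partial \<Lambda> A B N X S T - bch \<Lambda> A B X S T)) \<longlonglongrightarrow> 0"
    and "knorm \<Lambda> \<kappa> (bch \<Lambda> A B) \<le> bch_constant sA sB \<rho> * knorm \<Lambda> \<kappa> A * knorm \<Lambda> \<kappa> B"
proof -
  let ?t = "\<lambda>n. knorm \<Lambda> \<kappa> ((ad \<Lambda> A ^^ Suc n) B) / fact (Suc n)"
  define f where "f n = (\<lambda>X S T. (ad \<Lambda> A ^^ Suc n) B X S T / of_real (fact (Suc n)))" for n
  have partial: "bch_partial \<Lambda> A B N = (\<lambda>X S T. \<Sum>n<N. f n X S T)" for N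
    by (simp add: bch_partial_def f_def sum.atLeast1_atMost_eq)
  have bch: "bch \<Lambda> A B = (\<lambda>X S T. \<Sum>n. f n X S T)"
    by (simp add: bch_def f_def)
  have f_le: "knorm \<Lambda> \<kappa> (f n) \<le> ?t n" for n
    using knorm_smult[OF fin ne, of \<kappa> "of_real (inverse (fact (Suc n)))" "(ad \<Lambda> A ^^ Suc n) B"]
    by (simp add: f_def divide_inverse mult.commute norm_inverse del: fact_Suc)
  have summable: "summable (\<lambda>n. knorm \<Lambda> \<kappa> (f n))"
    using f_le by (intro summable_comparison_test'[OF bch_terms_summable_le(1)[OF assms]])
      (simp add: knorm_nonneg fin ne)
  show "(\<lambda>N. knorm \<Lambda> \<kappa> (\<lambda>X S T. bch_partial \<Lambda> A B N X S T - bch \<Lambda> A B X S T)) \<longlonglongrightarrow> 0"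
    unfolding partial bch by (rule knorm_series(1)[OF fin ne \<kappa> summable])
  have "knorm \<Lambda> \<kappa> (bch \<Lambda> A B) \<le> (\<Sum>n. knorm \<Lambda> \<kappa> (f n))"
    unfolding bch by (rule knorm_series(2)[OF fin ne \<kappa> summable])
  also have "\<dots> \<le> (\<Sum>n. ?t n)"
    by (intro suminf_le f_le summable bch_terms_summable_le(1)[OF assms])
  also have "\<dots> \<le> bch_constant sA sB \<rho> * knorm \<Lambda> \<kappa> A * knorm \<Lambda> \<kappa> B"
    by (rule bch_terms_summable_le(2)[OF assms])
  finally show "knorm \<Lambda> \<kappa> (bch \<Lambda> A B) \<le> bch_constant sA sB \<rho> * knorm \<Lambda> \<kappa> A * knorm \<Lambda> \<kappa> B" .
qed

lemma finite_lattice: "finite (lattice d L)"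
proof -
  have "lattice d L \<subseteq> {xs. set xs \<subseteq> {..<L} \<and> length xs = d}"
    by (auto simp: lattice_def in_set_conv_nth)
  then show ?thesis
    by (rule finite_subset) (simp add: finite_lists_length_eq)
qed

lemma lattice_nonempty: "0 < L \<Longrightarrow> lattice d L \<noteq> {}"
proof -
  assume "0 < L"
  then have "replicate d 0 \<in> lattice d L"
    by (simp add: lattice_def)
  then show ?thesis
    by blast
qed

theorem lemma2p2:
  fixes sA sB :: nat and \<rho> :: real
  assumes "\<rho> < 1"
  shows "\<exists>C_BCH :: real. \<forall>(d::nat) (L::nat) (\<kappa>::real) A B.
     let \<Lambda> = lattice d L in
     (d \<ge> 1 \<and> L > 0 \<and> even L \<and> \<kappa> \<ge> 0 \<and>
      is_interaction \<Lambda> A \<and> is_interaction \<Lambda> B \<and>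
      finite_range L \<Lambda> A \<and> finite_range L \<Lambda> B \<and>
      ssize \<Lambda> A = sA \<and> ssize \<Lambda> B = sB \<and>
      2 * real sA * knorm \<Lambda> \<kappa> A \<le> \<rho>)
     \<longrightarrow>
     summable (\<lambda>n. knorm \<Lambda> \<kappa> ((ad \<Lambda> A ^^ Suc n) B) / fact (Suc n)) \<and>
     (\<Sum>n. knorm \<Lambda> \<kappa> ((ad \<Lambda> A ^^ Suc n) B) / fact (Suc n))
        \<le> C_BCH * knorm \<Lambda> \<kappa> A * knorm \<Lambda> \<kappa> B \<and>
     (\<lambda>N. knorm \<Lambda> \<kappa> (\<lambda>X S T. bch_partial \<Lambda> A B N X S T - bch \<Lambda> A B X S T)) \<longlonglongrightarrow> 0 \<and>
     knorm \<Lambda> \<kappa> (bch \<Lambda> A B) \<le> C_BCH * knorm \<Lambda> \<kappa> A * knorm \<Lambda> \<kappa> B"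
proof (intro exI[of _ "bch_constant sA sB \<rho>"] allI, unfold Let_def, intro impI, elim conjE)
  fix d L :: nat and \<kappa> :: real and A B
  let ?\<Lambda> = "lattice d L"
  let ?C = "bch_constant sA sB \<rho>"
  assume "0 < L" "0 \<le> \<kappa>" "is_interaction ?\<Lambda> A" "is_interaction ?\<Lambda> B"
    and "ssize ?\<Lambda> A = sA" "ssize ?\<Lambda> B = sB" and "2 * real sA * knorm ?\<Lambda> \<kappa> A \<le> \<rho>"
  then have hyps: "finite ?\<Lambda>" "?\<Lambda> \<noteq> {}" "0 \<le> \<kappa>" "is_interaction ?\<Lambda> A" "is_interaction ?\<Lambda> B"
    "size_bound ?\<Lambda> A sA" "size_bound ?\<Lambda> B sB" "2 * real sA * knorm ?\<Lambda> \<kappa> A \<le> \<rho>" "\<rho> < 1"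
    using size_bound_ssize[OF finite_lattice] assms by (auto simp: finite_lattice lattice_nonempty)
  from bch_terms_summable_le[OF hyps] knorm_bch[OF hyps]
  show "summable (\<lambda>n. knorm ?\<Lambda> \<kappa> ((ad ?\<Lambda> A ^^ Suc n) B) / fact (Suc n)) \<and>
      (\<Sum>n. knorm ?\<Lambda> \<kappa> ((ad ?\<Lambda> A ^^ Suc n) B) / fact (Suc n)) \<le> ?C * knorm ?\<Lambda> \<kappa> A * knorm ?\<Lambda> \<kappa> B \<and>
      (\<lambda>N. knorm ?\<Lambda> \<kappa> (\<lambda>X S T. bch_partial ?\<Lambda> A B N X S T - bch ?\<Lambda> A B X S T)) \<longlonglongrightarrow> 0 \<and>
      knorm ?\<Lambda> \<kappa> (bch ?\<Lambda> A B) \<le> ?C * knorm ?\<Lambda> \<kappa> A * knorm ?\<Lambda> \<kappa> B"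
    by blast
qed

end
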